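(* Let $(\pi_r)_{r\in\mathbb{N}}$ be periods, let $(K_t)_{t\in\mathbb{N}}$ be the multiperiodic process with periods $(\pi_r)$, and let $W_r:=\inf\{t\in\mathbb{N}:K_t=r\}$. If $r\in\mathbb{N}$ is such that $\pi_i\ge2$ for all $1\le i\le r-1$, then (for every realization of the seeds) $$W_r\le \bar w_r:=\left(\cdots\left(\left(\pi_r\cdot\frac{\pi_{r-1}}{\pi_{r-1}-1}+1\right)\frac{\pi_{r-2}}{\pi_{r-2}-1}+1\right)\cdots\frac{\pi_1}{\pi_1-1}+1\right),$$ i.e. $\bar w_r=v_1$ where $v_r:=\pi_r$ and $v_i:=v_{i+1}\,\pi_i/(\pi_i-1)+1$ for $i=r-1,\dots,1$.
   Context: $\mathbb{N}=\{1,2,3,\dots\}$. Multiperiodic sequence with periods $\pi_r\in\mathbb{N}$ and seeds $\sigma_r\in\{1,\dots,\pi_r\}$: the sequence $(k_t)_{t\in\mathbb{N}}$ with values in $\mathbb{N}\cup\{\infty\}$ such that for each $r$, the subsequence obtained from $(k_t)$ by deleting all tokens $k_t<r$, denoted $(k^{(r)}_t)_{t\in\mathbb{N}}$, satisfies $k^{(r)}_t=r\iff t\equiv\sigma_r\pmod{\pi_r}$; entries left undefined for all $r$ are set to $\infty$. Equivalently: clocks $\phi_r$ start at $\sigma_r$; for each token, scan $r=1,2,\dots$, decrementing each clock with $\phi_r>1$, until the first $r$ with $\phi_r=1$, output that $r$ and reset $\phi_r=\pi_r$. The multiperiodic process with periods $(\pi_r)$ is the random multiperiodic sequence with these periods and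 independent random seeds $\Sigma_r$ uniformly distributed on $\{1,\dots,\pi_r\}$. *)

theory Defs
  imports Complex_Main "HOL-Library.Extended_Nat"
begin

text \<open>Clock formulation of a multiperiodic sequence. Periods \<open>\<pi> r\<close> and clocks
  \<open>\<phi> r\<close> are indexed by \<open>r \<ge> 1\<close>; values at index 0 are irrelevant.\<close>

definition mp_step :: "(nat \<Rightarrow> nat) \<Rightarrow> (nat \<Rightarrow> nat) \<Rightarrow> enat \<times> (nat \<Rightarrow> nat)" where
  "mp_step \<pi> \<phi> =
     (if \<exists>r\<ge>1. \<phi> r = 1 then
        (let k = (LEAST r. 1 \<le> r \<and> \<phi> r = 1) in
          (enat k, \<lambda>r. if 1 \<le> r \<and> r < k then (if \<phi> r > 1 then \<phi> r - 1 else \<phi> r)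
                      else if r = k then \<pi> r else \<phi> r))
      else
        (\<infinity>, \<lambda>r. if 1 \<le> r \<and> \<phi> r > 1 then \<phi> r - 1 else \<phi> r))"

primrec mp_state :: "(nat \<Rightarrow> nat) \<Rightarrow> (nat \<Rightarrow> nat) \<Rightarrow> nat \<Rightarrow> (nat \<Rightarrow> nat)" where
  "mp_state \<pi> \<sigma> 0 = \<sigma>"
| "mp_state \<pi> \<sigma> (Suc n) = snd (mp_step \<pi> (mp_state \<pi> \<sigma> n))"

text \<open>The multiperiodic sequence \<open>k_t\<close>, for \<open>t \<ge> 1\<close> (index 0 is meaningless).\<close>
definition mp_seq :: "(nat \<Rightarrow> nat) \<Rightarrow> (nat \<Rightarrow> nat) \<Rightarrow> nat \<Rightarrow> enat" where
  "mp_seq \<pi> \<sigma> t = fst (mp_step \<pi> (mp_state \<pi> \<sigma> (t - 1)))"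

definition mp_wait :: "(nat \<Rightarrow> nat) \<Rightarrow> (nat \<Rightarrow> nat) \<Rightarrow> nat \<Rightarrow> enat" where
  "mp_wait \<pi> \<sigma> r = (INF t\<in>{t. 1 \<le> t \<and> mp_seq \<pi> \<sigma> t = enat r}. enat t)"

text \<open>\<open>mp_v \<pi> r j = v_{r-j}\<close>, where \<open>v_r = \<pi>_r\<close> and \<open>v_i = v_{i+1} \<pi>_i/(\<pi>_i - 1) + 1\<close>.\<close>
primrec mp_v :: "(nat \<Rightarrow> nat) \<Rightarrow> nat \<Rightarrow> nat \<Rightarrow> real" where
  "mp_v \<pi> r 0 = real (\<pi> r)"
| "mp_v \<pi> r (Suc j) =
     mp_v \<pi> r j * real (\<pi> (r - Suc j)) / (real (\<pi> (r - Suc j)) - 1) + 1"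

definition mp_wbar :: "(nat \<Rightarrow> nat) \<Rightarrow> nat \<Rightarrow> real" where
  "mp_wbar \<pi> r = mp_v \<pi> r (r - 1)"

end

theory Submission
  imports Defs
begin

text \<open>Along the clock dynamics consider the potential \<open>P\<^sub>r = \<phi>\<^sub>r\<close> and
  \<open>P\<^sub>i = P\<^sub>i\<^sub>+\<^sub>1 + (P\<^sub>i\<^sub>+\<^sub>1 - \<phi>\<^sub>i) / (\<pi>\<^sub>i - 1) + 1\<close> for \<open>i < r\<close>.
  A token \<open>k\<close> with \<open>i \<le> k \<noteq> r\<close> lowers \<open>P\<^sub>i\<close> by at least one: for \<open>k = i\<close> the
  clock \<open>\<phi>\<^sub>i\<close> jumps from 1 to \<open>\<pi>\<^sub>i\<close> while \<open>P\<^sub>i\<^sub>+\<^sub>1\<close> is unchanged, and for \<open>k > i\<close> both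
  \<open>\<phi>\<^sub>i\<close> and (inductively) \<open>P\<^sub>i\<^sub>+\<^sub>1\<close> drop by at least one. Since clocks stay in
  \<open>{1..\<pi>\<^sub>i}\<close>, always \<open>P\<^sub>i \<ge> 1\<close>; hence at most \<open>P\<^sub>1(\<sigma>) - 1\<close> tokens precede the first
  token \<open>r\<close>. Finally \<open>P\<^sub>1(\<sigma>) \<le> mp_wbar \<pi> r\<close> because the seeds are at least 1.\<close>

definition clocks_valid :: "(nat \<Rightarrow> nat) \<Rightarrow> (nat \<Rightarrow> nat) \<Rightarrow> bool" where
  "clocks_valid \<pi> \<phi> \<longleftrightarrow> (\<forall>x\<ge>1. 1 \<le> \<phi> x \<and> \<phi> x \<le> \<pi> x)"

definition clock_transition ::
    "(nat \<Rightarrow> nat) \<Rightarrow> enat \<Rightarrow> (nat \<Rightarrow> nat) \<Rightarrow> (nat \<Rightarrow> nat) \<Rightarrow> bool" where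
  "clock_transition \<pi> k \<phi> \<phi>' \<longleftrightarrow> (\<forall>x\<ge>1.
     (k < enat x \<longrightarrow> \<phi>' x = \<phi> x) \<and>
     (k = enat x \<longrightarrow> \<phi> x = 1 \<and> \<phi>' x = \<pi> x) \<and>
     (enat x < k \<longrightarrow> 1 < \<phi> x \<and> \<phi>' x = \<phi> x - 1))"

text \<open>\<open>mp_potential \<pi> r j \<phi> = P\<^bsub>r - j\<^esub>\<close>, indexed like \<open>mp_v\<close>.\<close>
primrec mp_potential :: "(nat \<Rightarrow> nat) \<Rightarrow> nat \<Rightarrow> nat \<Rightarrow> (nat \<Rightarrow> nat) \<Rightarrow> real" where
  "mp_potential \<pi> r 0 \<phi> = real (\<phi> r)"
| "mp_potential \<pi> r (Suc j) \<phi> =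
     mp_potential \<pi> r j \<phi> + (mp_potential \<pi> r j \<phi> - real (\<phi> (r - Suc j)))
       / (real (\<pi> (r - Suc j)) - 1) + 1"

lemma mp_seq_ge_1: "enat 1 \<le> mp_seq \<pi> \<sigma> t"
proof (cases "\<exists>r\<ge>1. mp_state \<pi> \<sigma> (t - 1) r = 1")
  case True
  then have "1 \<le> (LEAST r. 1 \<le> r \<and> mp_state \<pi> \<sigma> (t - 1) r = 1)"
    by (metis (mono_tags, lifting) LeastI_ex)
  then show ?thesis using True by (simp add: mp_seq_def mp_step_def Let_def)
next
  case False
  then show ?thesis unfolding mp_seq_def mp_step_def if_not_P[OF False] by simp
qed

lemma mp_step_clock_transition:
  assumes "\<forall>x\<ge>1. 1 \<le> \<phi> x"
  shows "clock_transition \<pi> (fst (mp_step \<pi> \<phi>)) \<phi> (snd (mp_step \<pi> \<phi>))"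
proof (cases "\<exists>r\<ge>1. \<phi> r = 1")
  case True
  define k where "k = (LEAST r. 1 \<le> r \<and> \<phi> r = 1)"
  have k: "1 \<le> k" "\<phi> k = 1"
    unfolding k_def using LeastI_ex[OF True[unfolded Bex_def]] by auto
  have below_k: "\<phi> x \<noteq> 1" if "1 \<le> x" "x < k" for x
    using not_less_Least[of x "\<lambda>r. 1 \<le> r \<and> \<phi> r = 1"] that k_def by auto
  have step: "mp_step \<pi> \<phi> = (enat k, \<lambda>x. if 1 \<le> x \<and> x < k
                 then (if \<phi> x > 1 then \<phi> x - 1 else \<phi> x)
                 else if x = k then \<pi> x else \<phi> x)"
    unfolding mp_step_def if_P[OF True] Let_def k_def ..
  show ?thesis
    unfolding clock_transition_def step using assms k below_k
    by (force simp: le_neq_implies_less)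
next
  case False
  then show ?thesis
    using assms by (force simp: clock_transition_def mp_step_def le_neq_implies_less)
qed

lemma clock_transition_valid:
  assumes "clock_transition \<pi> k \<phi> \<phi>'" "clocks_valid \<pi> \<phi>" "\<And>x. 1 \<le> x \<Longrightarrow> 1 \<le> \<pi> x"
  shows "clocks_valid \<pi> \<phi>'"
  unfolding clocks_valid_def
proof (intro allI impI)
  fix x :: nat
  assume x: "1 \<le> x"
  consider "k < enat x" | "k = enat x" | "enat x < k" by (rule linorder_cases)
  then show "1 \<le> \<phi>' x \<and> \<phi>' x \<le> \<pi> x"
    using assms x by cases (auto simp: clock_transition_def clocks_valid_def)
qed

lemma mp_state_valid:
  assumes "clocks_valid \<pi> \<sigma>" "\<And>x. 1 \<le> x \<Longrightarrow> 1 \<le> \<pi> x"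
  shows "clocks_valid \<pi> (mp_state \<pi> \<sigma> n)"
proof (induction n)
  case (Suc n)
  then have "\<forall>x\<ge>1. 1 \<le> mp_state \<pi> \<sigma> n x" by (simp add: clocks_valid_def)
  then show ?case
    using clock_transition_valid[OF mp_step_clock_transition Suc assms(2)] by simp
qed (use assms in simp)

lemma mp_state_clock_transition:
  assumes "clocks_valid \<pi> (mp_state \<pi> \<sigma> n)"
  shows "clock_transition \<pi> (mp_seq \<pi> \<sigma> (Suc n)) (mp_state \<pi> \<sigma> n) (mp_state \<pi> \<sigma> (Suc n))"
  using assms mp_step_clock_transition by (simp add: mp_seq_def clocks_valid_def)

lemma mp_potential_cong:
  assumes "\<And>x. r - j \<le> x \<Longrightarrow> x \<le> r \<Longrightarrow> \<phi> x = \<psi> x"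
  shows "mp_potential \<pi> r j \<phi> = mp_potential \<pi> r j \<psi>"
  using assms by (induction j) auto

lemma mp_potential_ge_1:
  assumes "clocks_valid \<pi> \<phi>" "j < r" "\<And>i. 1 \<le> i \<Longrightarrow> i \<le> r - 1 \<Longrightarrow> 2 \<le> \<pi> i"
  shows "1 \<le> mp_potential \<pi> r j \<phi>"
  using assms(2)
proof (induction j)
  case 0
  then show ?case using assms(1) by (simp add: clocks_valid_def)
next
  case (Suc j)
  define i where "i = r - Suc j"
  define p where "p = real (\<pi> i)"
  define m where "m = mp_potential \<pi> r j \<phi>"
  have "1 \<le> i" "i \<le> r - 1" using Suc.prems i_def by auto
  then have p: "2 \<le> p" "1 \<le> real (\<phi> i)" "real (\<phi> i) \<le> p"
    using assms(1,3) by (auto simp: p_def clocks_valid_def)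
  have "1 \<le> m" using Suc m_def by simp
  then have "-1 \<le> (m - real (\<phi> i)) / (p - 1)"
    using p by (simp add: field_simps)
  then show ?case using \<open>1 \<le> m\<close> by (simp add: m_def p_def i_def)
qed

lemma mp_potential_decrease:
  assumes trans: "clock_transition \<pi> k \<phi> \<phi>'"
    and big: "\<And>i. 1 \<le> i \<Longrightarrow> i \<le> r - 1 \<Longrightarrow> 2 \<le> \<pi> i"
    and "j < r" "enat (r - j) \<le> k" "k \<noteq> enat r"
  shows "mp_potential \<pi> r j \<phi>' \<le> mp_potential \<pi> r j \<phi> - 1"
  using assms(3-4)
proof (induction j)
  case 0
  then have "1 < \<phi> r \<and> \<phi>' r = \<phi> r - 1"
    using trans \<open>k \<noteq> enat r\<close> by (simp add: clock_transition_def)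
  then show ?case by simp
next
  case (Suc j)
  define i where "i = r - Suc j"
  define p where "p = real (\<pi> i)"
  define m where "m = mp_potential \<pi> r j \<phi>"
  define m' where "m' = mp_potential \<pi> r j \<phi>'"
  have i: "1 \<le> i" "i \<le> r - 1" "r - j = Suc i" using Suc.prems i_def by auto
  have p: "2 \<le> p" using big[OF i(1,2)] p_def by simp
  have unfold: "mp_potential \<pi> r (Suc j) \<psi> = mp_potential \<pi> r j \<psi>
                  + (mp_potential \<pi> r j \<psi> - real (\<psi> i)) / (p - 1) + 1" for \<psi>
    by (simp add: i_def p_def)
  have "m' + (m' - real (\<phi>' i)) / (p - 1) \<le> m + (m - real (\<phi> i)) / (p - 1) - 1"
  proof (cases "k = enat i")
    case True
    \<comment> \<open>Clock \<open>i\<close> is reset while the higher clocks, hence \<open>P\<^sub>i\<^sub>+\<^sub>1\<close>, are untouched.\<close>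
    have "m' = m" unfolding m'_def m_def
      by (rule mp_potential_cong) (use trans True i in \<open>auto simp: clock_transition_def\<close>)
    moreover have "\<phi> i = 1" "real (\<phi>' i) = p"
      using trans True i by (auto simp: clock_transition_def p_def)
    ultimately show ?thesis using p by (simp add: field_simps)
  next
    case False
    then have "enat i < k" using Suc.prems(2) by (simp add: i_def)
    then have "1 < \<phi> i" "real (\<phi>' i) = real (\<phi> i) - 1"
      using trans i(1) by (auto simp: clock_transition_def)
    moreover have "m' \<le> m - 1"
      using Suc.IH Suc.prems(1) \<open>enat i < k\<close> i(3) by (simp add: m_def m'_def Suc_ile_eq)
    ultimately have "(m' - real (\<phi>' i)) / (p - 1) \<le> (m - real (\<phi> i)) / (p - 1)"
      using p by (intro divide_right_mono) auto
    with \<open>m' \<le> m - 1\<close> show ?thesis by linarith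
  qed
  then show ?case unfolding unfold m_def[symmetric] m'_def[symmetric] by linarith
qed

lemma mp_potential_le_mp_v:
  assumes "clocks_valid \<pi> \<phi>" "j < r" "\<And>i. 1 \<le> i \<Longrightarrow> i \<le> r - 1 \<Longrightarrow> 2 \<le> \<pi> i"
  shows "mp_potential \<pi> r j \<phi> \<le> mp_v \<pi> r j"
  using assms(2)
proof (induction j)
  case 0
  then show ?case using assms(1) by (simp add: clocks_valid_def)
next
  case (Suc j)
  define i where "i = r - Suc j"
  define p where "p = real (\<pi> i)"
  define m where "m = mp_potential \<pi> r j \<phi>"
  define v where "v = mp_v \<pi> r j"
  have "1 \<le> i" "i \<le> r - 1" using Suc.prems i_def by auto
  then have p: "2 \<le> p" "1 \<le> real (\<phi> i)"
    using assms(1,3) by (auto simp: p_def clocks_valid_def)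
  have "m \<le> v" using Suc m_def v_def by simp
  have "(m - real (\<phi> i)) / (p - 1) \<le> (m - 1) / (p - 1)"
    using p by (intro divide_right_mono) auto
  moreover have "m + (m - 1) / (p - 1) \<le> m * p / (p - 1)"
    using p by (simp add: field_simps)
  moreover have "m * p / (p - 1) \<le> v * p / (p - 1)"
    using p \<open>m \<le> v\<close> by (intro divide_right_mono mult_right_mono) auto
  ultimately have "m + (m - real (\<phi> i)) / (p - 1) + 1 \<le> v * p / (p - 1) + 1"
    by linarith
  then show ?case by (simp add: m_def v_def p_def i_def)
qed

lemma mp_potential_mp_state_le:
  assumes periods: "\<And>x. 1 \<le> x \<Longrightarrow> 1 \<le> \<pi> x"
    and valid: "clocks_valid \<pi> \<sigma>"
    and big: "\<And>i. 1 \<le> i \<Longrightarrow> i \<le> r - 1 \<Longrightarrow> 2 \<le> \<pi> i"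
    and "1 \<le> r"
    and "\<And>t. 1 \<le> t \<Longrightarrow> t \<le> n \<Longrightarrow> mp_seq \<pi> \<sigma> t \<noteq> enat r"
  shows "mp_potential \<pi> r (r - 1) (mp_state \<pi> \<sigma> n) \<le> mp_potential \<pi> r (r - 1) \<sigma> - real n"
  using assms(5)
proof (induction n)
  case (Suc n)
  have "mp_potential \<pi> r (r - 1) (mp_state \<pi> \<sigma> (Suc n))
          \<le> mp_potential \<pi> r (r - 1) (mp_state \<pi> \<sigma> n) - 1"
    using mp_potential_decrease[OF mp_state_clock_transition[OF mp_state_valid[OF valid periods]] big]
      mp_seq_ge_1 Suc.prems[of "Suc n"] \<open>1 \<le> r\<close> by simp
  then show ?case using Suc by simp
qed simp

lemma INF_hitting_time_le:
  fixes Q :: "nat \<Rightarrow> bool" and B :: real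
  assumes "\<And>n. (\<And>t. 1 \<le> t \<Longrightarrow> t \<le> n \<Longrightarrow> \<not> Q t) \<Longrightarrow> real n + 1 \<le> B"
  shows "\<exists>n. (INF t\<in>{t. 1 \<le> t \<and> Q t}. enat t) = enat n \<and> real n \<le> B"
proof -
  have "\<exists>t. 1 \<le> t \<and> Q t"
  proof (rule ccontr)
    assume "\<nexists>t. 1 \<le> t \<and> Q t"
    then have "real (nat \<lceil>B\<rceil>) + 1 \<le> B" using assms by blast
    then show False using real_nat_ceiling_ge[of B] by linarith
  qed
  define n where "n = (LEAST t. 1 \<le> t \<and> Q t)"
  have n: "1 \<le> n \<and> Q n"
    unfolding n_def by (rule LeastI_ex) fact
  have min: "n \<le> t" if "1 \<le> t \<and> Q t" for t
    unfolding n_def using that by (rule Least_le)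
  have "(INF t\<in>{t. 1 \<le> t \<and> Q t}. enat t) = enat n"
    by (rule antisym) (use n min in \<open>auto intro: INF_lower2 INF_greatest\<close>)
  moreover have "real (n - 1) + 1 \<le> B"
    using assms[of "n - 1"] min by force
  ultimately show ?thesis using n by auto
qed

theorem theorem5:
  fixes \<pi> \<sigma> :: "nat \<Rightarrow> nat" and r :: nat
  assumes periods: "\<And>i. 1 \<le> i \<Longrightarrow> 1 \<le> \<pi> i"
    and seeds: "\<And>i. 1 \<le> i \<Longrightarrow> 1 \<le> \<sigma> i \<and> \<sigma> i \<le> \<pi> i"
    and r: "1 \<le> r"
    and big: "\<And>i. 1 \<le> i \<Longrightarrow> i \<le> r - 1 \<Longrightarrow> 2 \<le> \<pi> i"
  shows "\<exists>n. mp_wait \<pi> \<sigma> r = enat n \<and> real n \<le> mp_wbar \<pi> r"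
proof -
  let ?P = "mp_potential \<pi> r (r - 1)"
  have valid: "clocks_valid \<pi> \<sigma>" using seeds by (simp add: clocks_valid_def)
  have "real n + 1 \<le> ?P \<sigma>" if "\<And>t. 1 \<le> t \<Longrightarrow> t \<le> n \<Longrightarrow> mp_seq \<pi> \<sigma> t \<noteq> enat r" for n
  proof -
    have "?P (mp_state \<pi> \<sigma> n) \<le> ?P \<sigma> - real n"
      by (rule mp_potential_mp_state_le) (use periods valid big r that in auto)
    moreover have "1 \<le> ?P (mp_state \<pi> \<sigma> n)"
      by (rule mp_potential_ge_1) (use mp_state_valid periods valid big r in auto)
    ultimately show ?thesis by linarith
  qed
  then obtain n where "mp_wait \<pi> \<sigma> r = enat n" "real n \<le> ?P \<sigma>"
    using INF_hitting_time_le[of "\<lambda>t. mp_seq \<pi> \<sigma> t = enat r"] unfolding mp_wait_def by blast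
  moreover have "?P \<sigma> \<le> mp_wbar \<pi> r"
    unfolding mp_wbar_def using mp_potential_le_mp_v[OF valid _ big] r by simp
  ultimately show ?thesis by auto
qed

end
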